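(* Let $\mathcal{A}$ be a nonnegative combinatorially symmetric weakly irreducible tensor of order $m$ and dimension $n$ which is spectral $\ell$-symmetric. Then $\mathbb{P}\mathbb{V}_0(\mathcal{A})$ is isomorphic as a $\mathbb{Z}_m$-module to $\mathbb{P}\mathbb{S}_0(\mathcal{A})$. In particular, if $m$ is a prime, then $\mathbb{P}\mathbb{V}_0(\mathcal{A})$ is a linear space over $\mathbb{Z}_m$, and $\mathbb{P}\mathbb{V}_j(\mathcal{A})$ is an affine space over $\mathbb{Z}_m$ (a coset of $\mathbb{P}\mathbb{V}_0(\mathcal{A})$ in $(\mathbb{P}\mathbb{V},\circ)$) for each $j\in[\ell-1]$.
   Context: Tensors: order $m$, dimension $n$, entries $a_{i_1\cdots i_m}$. Eigenvalue/eigenvector: $\mathcal{A}x^{m-1}=\lambda x^{[m-1]}$, $x\ne0$, where $(\mathcal{A}x^{m-1})_i=\sum a_{ii_2\cdots i_m}x_{i_2}\cdots x_{i_m}$, $x^{[m-1]}=(x_i^{m-1})$. $\mathrm{Spec}(\mathcal{A})$: multiset of roots of the resultant-based characteristic polynomial $\det(\lambda\mathcal{I}-\mathcal{A})$; $\rho(\mathcal{A})$: largest modulus. Spectral $\ell$-symmetric: $\mathrm{Spec}(\mathcal{A})=e^{\mathrm{i}2\pi/\ell}\mathrm{Spec}(\mathcal{A})$. Weakly irreducible: the digraph on $[n]$ with arc $(i,j)$ whenever some $a_{ii_2\cdots i_m}\neq0$ with $j\in\{i_2,\dots,i_m\}$ is strongly connected. Combinatorially symmetric: the support is invariant under permuting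 indices. Known facts: $\rho(\mathcal{A})$ has a positive eigenvector unique up to scaling, and eigenvectors for eigenvalues of modulus $\rho(\mathcal{A})$ have no zero entries. Let $\lambda_j=\rho(\mathcal{A})e^{\mathrm{i}2\pi j/\ell}$; $\mathbb{P}\mathbb{V}_j(\mathcal{A})$ is the set of eigenvectors for $\lambda_j$ normalized with $y_1=1$; $\mathbb{P}\mathbb{V}=\bigcup_{j=0}^{\ell-1}\mathbb{P}\mathbb{V}_j$; $v_p$ the positive element of $\mathbb{P}\mathbb{V}_0$; $D_y=\mathrm{diag}(y_i/|y_i|)$; $y\circ\hat y=D_yD_{\hat y}v_p$. Under the hypotheses $(\mathbb{P}\mathbb{V},\circ)$ is an abelian group with identity $v_p$ in which every element has order dividing $m$, hence a $\mathbb{Z}_m$-module; $\mathbb{P}\mathbb{V}_0$ is a submodule. Incidence matrix $B_{\mathcal{A}}$: rows indexed by $E(\mathcal{A})=\{(i_1,\dots,i_m): a_{i_1\cdots i_m}\ne0,\ i_1\le\dots\le i_m\}$, entries $b_{e,j}=|\{k:i_k=j\}|$, over $\mathbb{Z}_m$. $\mathbb{P}\mathbb{S}_0(\mathcal{A})=\{x\in\mathbb{Z}_m^n: B_{\mathcal{A}}x=0\text{ over }\mathbb{Z}_m,\ x_1=0\}$. *)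

theory Defs
  imports Complex_Main "HOL-Library.Multiset" "HOL-Algebra.Group" "HOL-Computational_Algebra.Primes"
begin

text \<open>Tensors of order m and dimension n are functions on index lists (i_1,...,i_m),
  indices 0-based in {0..<n}. Index 0 plays the role of index 1 of the paper.\<close>

definition tuples :: "nat \<Rightarrow> nat \<Rightarrow> nat list set" where
  "tuples n k = {is. length is = k \<and> set is \<subseteq> {..<n}}"

definition tensor_apply :: "nat \<Rightarrow> nat \<Rightarrow> (nat list \<Rightarrow> real) \<Rightarrow> (nat \<Rightarrow> complex) \<Rightarrow> nat \<Rightarrow> complex" where
  "tensor_apply m n A x i =
     (\<Sum>is\<in>tuples n (m - 1). complex_of_real (A (i # is)) * (\<Prod>k<m - 1. x (is ! k)))"

definition is_eigenpair :: "nat \<Rightarrow> nat \<Rightarrow> (nat list \<Rightarrow> real) \<Rightarrow> complex \<Rightarrow> (nat \<Rightarrow> complex) \<Rightarrow> bool" where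
  "is_eigenpair m n A lam x \<longleftrightarrow>
     (\<exists>i<n. x i \<noteq> 0) \<and> (\<forall>i<n. tensor_apply m n A x i = lam * x i ^ (m - 1))"

definition is_eigenvalue :: "nat \<Rightarrow> nat \<Rightarrow> (nat list \<Rightarrow> real) \<Rightarrow> complex \<Rightarrow> bool" where
  "is_eigenvalue m n A lam \<longleftrightarrow> (\<exists>x. is_eigenpair m n A lam x)"

definition spectral_radius :: "nat \<Rightarrow> nat \<Rightarrow> (nat list \<Rightarrow> real) \<Rightarrow> real" where
  "spectral_radius m n A = Sup {cmod lam | lam. is_eigenvalue m n A lam}"

definition nonneg_tensor :: "nat \<Rightarrow> nat \<Rightarrow> (nat list \<Rightarrow> real) \<Rightarrow> bool" where
  "nonneg_tensor m n A \<longleftrightarrow> (\<forall>is\<in>tuples n m. A is \<ge> 0)"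

definition comb_symmetric :: "nat \<Rightarrow> nat \<Rightarrow> (nat list \<Rightarrow> real) \<Rightarrow> bool" where
  "comb_symmetric m n A \<longleftrightarrow>
     (\<forall>is\<in>tuples n m. \<forall>js. mset js = mset is \<longrightarrow> (A is \<noteq> 0 \<longleftrightarrow> A js \<noteq> 0))"

definition tensor_digraph :: "nat \<Rightarrow> nat \<Rightarrow> (nat list \<Rightarrow> real) \<Rightarrow> (nat \<times> nat) set" where
  "tensor_digraph m n A =
     {(i, j). i < n \<and> j < n \<and> (\<exists>is\<in>tuples n (m - 1). A (i # is) \<noteq> 0 \<and> j \<in> set is)}"

definition weakly_irreducible :: "nat \<Rightarrow> nat \<Rightarrow> (nat list \<Rightarrow> real) \<Rightarrow> bool" where
  "weakly_irreducible m n A \<longleftrightarrow>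
     (\<forall>i<n. \<forall>j<n. (i, j) \<in> (tensor_digraph m n A)\<^sup>*)"

definition spectral_sym :: "nat \<Rightarrow> nat \<Rightarrow> (nat list \<Rightarrow> real) \<Rightarrow> nat \<Rightarrow> bool" where
  "spectral_sym m n A l \<longleftrightarrow>
     (\<forall>lam. is_eigenvalue m n A lam \<longleftrightarrow> is_eigenvalue m n A (cis (2 * pi / real l) * lam))"

definition lam_j :: "nat \<Rightarrow> nat \<Rightarrow> (nat list \<Rightarrow> real) \<Rightarrow> nat \<Rightarrow> nat \<Rightarrow> complex" where
  "lam_j m n A l j = complex_of_real (spectral_radius m n A) * cis (2 * pi * real j / real l)"

definition normalized_eigvecs :: "nat \<Rightarrow> nat \<Rightarrow> (nat list \<Rightarrow> real) \<Rightarrow> complex \<Rightarrow> (nat \<Rightarrow> complex) set" where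
  "normalized_eigvecs m n A lam = {y. is_eigenpair m n A lam y \<and> y 0 = 1 \<and> (\<forall>i\<ge>n. y i = 0)}"

definition PV_j :: "nat \<Rightarrow> nat \<Rightarrow> (nat list \<Rightarrow> real) \<Rightarrow> nat \<Rightarrow> nat \<Rightarrow> (nat \<Rightarrow> complex) set" where
  "PV_j m n A l j = normalized_eigvecs m n A (lam_j m n A l j)"

definition PV :: "nat \<Rightarrow> nat \<Rightarrow> (nat list \<Rightarrow> real) \<Rightarrow> nat \<Rightarrow> (nat \<Rightarrow> complex) set" where
  "PV m n A l = (\<Union>j<l. PV_j m n A l j)"

definition PV0 :: "nat \<Rightarrow> nat \<Rightarrow> (nat list \<Rightarrow> real) \<Rightarrow> (nat \<Rightarrow> complex) set" where
  "PV0 m n A = normalized_eigvecs m n A (complex_of_real (spectral_radius m n A))"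

definition vp :: "nat \<Rightarrow> nat \<Rightarrow> (nat list \<Rightarrow> real) \<Rightarrow> nat \<Rightarrow> complex" where
  "vp m n A = (THE v. v \<in> PV0 m n A \<and> (\<forall>i<n. Im (v i) = 0 \<and> Re (v i) > 0))"

text \<open>y \<circ> z = D_y D_z v_p\<close>
definition pv_comp :: "nat \<Rightarrow> nat \<Rightarrow> (nat list \<Rightarrow> real) \<Rightarrow> (nat \<Rightarrow> complex) \<Rightarrow> (nat \<Rightarrow> complex) \<Rightarrow> nat \<Rightarrow> complex" where
  "pv_comp m n A y z = (\<lambda>i. if i < n
      then (y i / complex_of_real (cmod (y i))) * (z i / complex_of_real (cmod (z i))) * vp m n A i
      else 0)"

definition PV0_group :: "nat \<Rightarrow> nat \<Rightarrow> (nat list \<Rightarrow> real) \<Rightarrow> (nat \<Rightarrow> complex) monoid" where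
  "PV0_group m n A = \<lparr>carrier = PV0 m n A, monoid.mult = pv_comp m n A, monoid.one = vp m n A\<rparr>"

definition edges :: "nat \<Rightarrow> nat \<Rightarrow> (nat list \<Rightarrow> real) \<Rightarrow> nat list set" where
  "edges m n A = {e\<in>tuples n m. sorted e \<and> A e \<noteq> 0}"

definition incidence :: "nat list \<Rightarrow> nat \<Rightarrow> nat" where
  "incidence e j = count (mset e) j"

text \<open>Elements of Z_m^n as functions with values in {0..<m} on {0..<n}, zero elsewhere.\<close>
definition PS0 :: "nat \<Rightarrow> nat \<Rightarrow> (nat list \<Rightarrow> real) \<Rightarrow> (nat \<Rightarrow> nat) set" where
  "PS0 m n A = {x. (\<forall>i<n. x i < m) \<and> (\<forall>i\<ge>n. x i = 0) \<and> x 0 = 0 \<and>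
      (\<forall>e\<in>edges m n A. (\<Sum>j<n. incidence e j * x j) mod m = 0)}"

definition PS0_group :: "nat \<Rightarrow> nat \<Rightarrow> (nat list \<Rightarrow> real) \<Rightarrow> (nat \<Rightarrow> nat) monoid" where
  "PS0_group m n A = \<lparr>carrier = PS0 m n A, monoid.mult = (\<lambda>x y i. (x i + y i) mod m), monoid.one = (\<lambda>i. 0)\<rparr>"

end

theory Submission
  imports Defs "HOL-Analysis.Analysis"
begin

text \<open>
  A positive eigenvector \<open>v\<close> is obtained by minimising the Collatz-Wielandt function
  \<open>max_i (A x^(m-1))_i / x_i^(m-1)\<close> over positive \<open>x\<close>: weak irreducibility keeps the normalised
  sublevel sets in a compact box and forces the minimiser to be an eigenvector.  Comparing an
  eigenvector \<open>y\<close> of \<open>\<lambda>\<close> with the multiples of \<open>v\<close> gives \<open>|\<lambda>| \<le> \<rho>\<close>, and \<open>|y|\<close> proportional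
  to \<open>v\<close> when \<open>|\<lambda>| = \<rho>\<close>.  In that case equality in the triangle inequality says that the phases
  \<open>d = sgn y\<close> satisfy \<open>d_i2 ... d_im = (\<lambda>/\<rho>) d_i^(m-1)\<close> on every nonzero entry \<open>a_i i2 ... im\<close>,
  and conversely every such unimodular \<open>d\<close> yields the eigenvector \<open>v d\<close>.  As \<open>\<circ>\<close> multiplies
  phases, \<open>\<bbbP>\<bbbV>\<^sub>j\<close> is a coset of \<open>\<bbbP>\<bbbV>\<^sub>0\<close>.  For \<open>\<lambda> = \<rho>\<close>, combinatorial symmetry makes
  the product of the phases over an entry symmetric in its indices, so by connectivity every
  phase is an \<open>m\<close>-th root of unity \<open>\<omega>^x_i\<close>, and the phase condition becomes \<open>B_A x = 0\<close> over
  \<open>\<int>_m\<close>.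
\<close>

lemma finite_tuples: "finite (tuples n k)"
proof -
  have "tuples n k = {xs. set xs \<subseteq> {..<n} \<and> length xs = k}"
    by (auto simp: tuples_def)
  then show ?thesis
    using finite_lists_length_eq[of "{..<n}" k] by simp
qed

lemma length_tuples: "js \<in> tuples n k \<Longrightarrow> length js = k"
  unfolding tuples_def by simp

lemma tuples_nth: "js \<in> tuples n k \<Longrightarrow> j < k \<Longrightarrow> js ! j < n"
  unfolding tuples_def by (auto simp: subset_iff)

lemma Cons_mem_tuples: "i < n \<Longrightarrow> js \<in> tuples n k \<Longrightarrow> i # js \<in> tuples n (Suc k)"
  unfolding tuples_def by auto

lemma prod_list_map_mset_eq:
  fixes f :: "'a \<Rightarrow> 'b::comm_monoid_mult"
  shows "mset xs = mset ys \<Longrightarrow> prod_list (map f xs) = prod_list (map f ys)"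
  using prod_mset_prod_list[of "map f xs"] prod_mset_prod_list[of "map f ys"] by simp

lemma prod_lessThan_nth: "length js = q \<Longrightarrow> (\<Prod>k<q. f (js ! k)) = prod_list (map f js)"
  by (simp add: prod.list_conv_set_nth atLeast0LessThan)

lemma sum_lessThan_nth: "length js = q \<Longrightarrow> (\<Sum>k<q. f (js ! k)) = sum_list (map f js)"
  by (simp add: sum_list_sum_nth atLeast0LessThan)

lemma prod_less_prod:
  fixes f g :: "'a \<Rightarrow> 'b::linordered_semidom"
  assumes "finite S" and "\<And>k. k \<in> S \<Longrightarrow> 0 \<le> f k \<and> f k \<le> g k"
    and "\<And>k. k \<in> S \<Longrightarrow> 0 < g k" and "k0 \<in> S" and "f k0 < g k0"
  shows "prod f S < prod g S"
proof -
  have "prod f (S - {k0}) \<le> prod g (S - {k0})"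
    by (rule prod_mono) (use assms(2) in auto)
  moreover have "0 < prod g (S - {k0})"
    by (rule prod_pos) (use assms(3) in auto)
  ultimately have "f k0 * prod f (S - {k0}) < g k0 * prod g (S - {k0})"
    using assms(2)[OF assms(4)] assms(5)
    by (meson mult_left_mono mult_strict_right_mono order_le_less_trans)
  then show ?thesis
    using assms(1,4) by (simp add: prod.remove)
qed

lemma prod_ge_factor_mult_power:
  fixes f :: "'a \<Rightarrow> 'b::linordered_semidom"
  assumes "finite S" and "k0 \<in> S" and "\<And>k. k \<in> S \<Longrightarrow> c \<le> f k" and "0 \<le> c"
  shows "f k0 * c ^ (card S - 1) \<le> prod f S"
proof -
  have "c ^ (card S - 1) = (\<Prod>k\<in>S - {k0}. c)"
    using assms(2) by (simp add: card_Diff_singleton)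
  also have "\<dots> \<le> prod f (S - {k0})"
    by (rule prod_mono) (use assms(3,4) in auto)
  finally have "f k0 * c ^ (card S - 1) \<le> f k0 * prod f (S - {k0})"
    using assms(2,3,4) by (intro mult_left_mono) (auto intro: order_trans)
  then show ?thesis
    using assms(1,2) by (simp add: prod.remove)
qed

lemma rtrancl_leaves_set:
  assumes "(a, b) \<in> R\<^sup>*" and "a \<in> I" and "b \<notin> I"
  shows "\<exists>c d. (c, d) \<in> R \<and> c \<in> I \<and> d \<notin> I"
  using assms by (induction rule: rtrancl_induct) blast+

lemma continuous_on_Max_image:
  fixes f :: "'i \<Rightarrow> 'a::topological_space \<Rightarrow> real"
  assumes "finite I" and "I \<noteq> {}" and "\<And>i. i \<in> I \<Longrightarrow> continuous_on S (f i)"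
  shows "continuous_on S (\<lambda>x. Max ((\<lambda>i. f i x) ` I))"
  using assms
proof (induction I rule: finite_ne_induct)
  case (singleton i)
  then show ?case by simp
next
  case (insert i I)
  have "continuous_on S (\<lambda>x. max (f i x) (Max ((\<lambda>i. f i x) ` I)))"
    using insert by (intro continuous_on_max) auto
  then show ?case
    using insert by (simp add: Max_insert)
qed

lemma compact_PiE_UNIV:
  fixes S :: "'i \<Rightarrow> 'a::topological_space set"
  assumes "\<And>i. compact (S i)"
  shows "compact (PiE UNIV S)"
proof -
  have "compactin (product_topology (\<lambda>i. euclidean) UNIV) (PiE UNIV S)"
    using assms by (subst compactin_PiE) (auto simp: compactin_euclidean_iff)
  then show ?thesis
    by (simp add: euclidean_product_topology compactin_euclidean_iff)
qed

lemma small_decrement_keeps_strict: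
  fixes y a :: "'a \<Rightarrow> real"
  assumes "finite J" and "\<And>j. j \<in> J \<Longrightarrow> 0 < y j \<and> a j < r * y j ^ q"
  obtains \<delta> where "0 < \<delta>" and "\<And>j. j \<in> J \<Longrightarrow> \<delta> < y j \<and> a j < r * (y j - \<delta>) ^ q"
proof -
  have "\<forall>j\<in>J. eventually (\<lambda>\<delta>. \<delta> < y j \<and> a j < r * (y j - \<delta>) ^ q) (at_right 0)"
  proof
    fix j assume j: "j \<in> J"
    have "((\<lambda>\<delta>. r * (y j - \<delta>) ^ q) \<longlongrightarrow> r * (y j - 0) ^ q) (at_right 0)"
      by (intro tendsto_intros)
    then have "eventually (\<lambda>\<delta>. a j < r * (y j - \<delta>) ^ q) (at_right 0)"
      using assms(2)[OF j] by (intro order_tendstoD(1)) auto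
    moreover have "eventually (\<lambda>\<delta>. \<delta> < y j) (at_right 0)"
      using assms(2)[OF j] by (intro order_tendstoD(2)[OF tendsto_ident_at]) auto
    ultimately show "eventually (\<lambda>\<delta>. \<delta> < y j \<and> a j < r * (y j - \<delta>) ^ q) (at_right 0)"
      by eventually_elim auto
  qed
  then have "eventually (\<lambda>\<delta>. \<forall>j\<in>J. \<delta> < y j \<and> a j < r * (y j - \<delta>) ^ q) (at_right 0)"
    by (rule eventually_ball_finite[OF assms(1)])
  then have "eventually (\<lambda>\<delta>. 0 < \<delta> \<and> (\<forall>j\<in>J. \<delta> < y j \<and> a j < r * (y j - \<delta>) ^ q)) (at_right (0::real))"
    using eventually_at_right_less[of "0::real"] by eventually_elim auto
  then show thesis
    using that eventually_happens[of _ "at_right (0::real)"] trivial_limit_at_right_real by blast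
qed

lemma of_real_norm_mult_sgn: "complex_of_real (cmod z) * sgn z = z"
  by (cases "z = 0") (simp_all add: sgn_eq)

lemma cnj_mult_self_unimodular: "cmod z = 1 \<Longrightarrow> cnj z * z = 1"
  using complex_norm_square[of z] by (simp add: mult.commute)

lemma weighted_sum_unimodular_eq_imp_eq_1:
  fixes w :: "'a \<Rightarrow> real" and z :: "'a \<Rightarrow> complex"
  assumes "finite S" and "\<And>k. k \<in> S \<Longrightarrow> 0 \<le> w k" and "\<And>k. k \<in> S \<Longrightarrow> cmod (z k) \<le> 1"
    and sum_eq: "(\<Sum>k\<in>S. of_real (w k) * z k) = of_real (\<Sum>k\<in>S. w k)"
    and "k0 \<in> S" and "0 < w k0"
  shows "z k0 = 1"
proof -
  have Re_le: "Re (z k) \<le> 1" if "k \<in> S" for k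
    using complex_Re_le_cmod[of "z k"] assms(3)[OF that] by linarith
  have "(\<Sum>k\<in>S. w k * (1 - Re (z k))) = 0"
    using arg_cong[OF sum_eq, of Re] by (simp add: Re_sum sum_subtractf right_diff_distrib)
  then have "w k0 * (1 - Re (z k0)) = 0"
    using assms(1,2,5) Re_le by (subst (asm) sum_nonneg_eq_0_iff) auto
  then have Re1: "Re (z k0) = 1"
    using assms(6) by simp
  then have "\<bar>Re (z k0)\<bar> = cmod (z k0)"
    using complex_Re_le_cmod[of "z k0"] assms(3)[OF assms(5)] by simp
  then have "Im (z k0) = 0"
    by (rule Im_eq_0)
  with Re1 show ?thesis
    by (simp add: complex_eq_iff)
qed

lemma weighted_sum_unimodular_eq_imp_eq:
  fixes w :: "'a \<Rightarrow> real" and z :: "'a \<Rightarrow> complex"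
  assumes "finite S" and "\<And>k. k \<in> S \<Longrightarrow> 0 \<le> w k" and "\<And>k. k \<in> S \<Longrightarrow> cmod (z k) \<le> 1"
    and e: "cmod e = 1" and sum_eq: "(\<Sum>k\<in>S. of_real (w k) * z k) = e * of_real (\<Sum>k\<in>S. w k)"
    and "k0 \<in> S" and "0 < w k0"
  shows "z k0 = e"
proof -
  have "(\<Sum>k\<in>S. of_real (w k) * (cnj e * z k)) = cnj e * (\<Sum>k\<in>S. of_real (w k) * z k)"
    by (simp add: sum_distrib_left mult.left_commute)
  also have "\<dots> = of_real (\<Sum>k\<in>S. w k)"
    unfolding sum_eq using cnj_mult_self_unimodular[OF e] by (simp add: mult.assoc[symmetric])
  finally have rotated: "(\<Sum>k\<in>S. of_real (w k) * (cnj e * z k)) = of_real (\<Sum>k\<in>S. w k)" .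
  have "cnj e * z k0 = 1"
  proof (rule weighted_sum_unimodular_eq_imp_eq_1[OF assms(1,2) _ rotated assms(6,7)])
    show "cmod (cnj e * z k) \<le> 1" if "k \<in> S" for k
      using assms(3)[OF that] e by (simp add: norm_mult)
  qed
  then show ?thesis
    using cnj_mult_self_unimodular[OF e] by (metis mult.left_commute mult_1_right)
qed

section \<open>Roots of unity\<close>

definition unit_root :: "nat \<Rightarrow> nat \<Rightarrow> complex" where
  "unit_root m k = cis (2 * pi * real k / real m)"

lemma unit_root_0 [simp]: "unit_root m 0 = 1"
  by (simp add: unit_root_def)

lemma norm_unit_root [simp]: "cmod (unit_root m k) = 1"
  by (simp add: unit_root_def)

lemma unit_root_self: "0 < m \<Longrightarrow> unit_root m m = 1"
  by (simp add: unit_root_def)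

lemma unit_root_add: "unit_root m (a + b) = unit_root m a * unit_root m b"
  unfolding unit_root_def by (simp add: cis_mult add_divide_distrib distrib_left)

lemma unit_root_mult: "unit_root m (a * b) = unit_root m a ^ b"
  by (induction b) (simp_all add: unit_root_add)

lemma unit_root_sum: "unit_root m (sum f S) = (\<Prod>k\<in>S. unit_root m (f k))"
  by (induction S rule: infinite_finite_induct) (simp_all add: unit_root_add)

lemma bij_betw_unit_root:
  assumes "0 < m"
  shows "bij_betw (unit_root m) {..<m} {z. z ^ m = 1}"
  unfolding unit_root_def[abs_def] by (rule Complex.bij_betw_roots_unity[OF assms])

lemma unit_root_mod:
  assumes "0 < m"
  shows "unit_root m (a mod m) = unit_root m a"
proof -
  have "unit_root m a = unit_root m (a mod m + m * (a div m))"
    by simp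
  also have "\<dots> = unit_root m (a mod m) * unit_root m m ^ (a div m)"
    by (simp only: unit_root_add unit_root_mult)
  finally show ?thesis
    using unit_root_self[OF assms] by simp
qed

lemma unit_root_eq_iff:
  assumes "0 < m"
  shows "unit_root m a = unit_root m b \<longleftrightarrow> a mod m = b mod m"
proof
  assume "unit_root m a = unit_root m b"
  then have "unit_root m (a mod m) = unit_root m (b mod m)"
    using assms by (simp add: unit_root_mod)
  moreover have "inj_on (unit_root m) {..<m}"
    using bij_betw_unit_root[OF assms] by (simp add: bij_betw_def)
  ultimately show "a mod m = b mod m"
    using assms by (auto dest: inj_onD)
next
  assume "a mod m = b mod m"
  then show "unit_root m a = unit_root m b"
    using unit_root_mod[OF assms, of a] unit_root_mod[OF assms, of b] by simp
qed

lemma unit_root_prod_eq_power_iff: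
  assumes "m = Suc q"
  shows "(\<Prod>k\<in>S. unit_root m (f k)) = unit_root m a ^ q \<longleftrightarrow> (a + sum f S) mod m = 0"
proof -
  have am: "a + a * q = a * m" and "0 < m"
    using assms by simp_all
  have "unit_root m a \<noteq> 0"
    using norm_unit_root[of m a] by (auto simp del: norm_unit_root)
  then have "(\<Prod>k\<in>S. unit_root m (f k)) = unit_root m a ^ q \<longleftrightarrow>
      unit_root m a * unit_root m (sum f S) = unit_root m a * unit_root m (a * q)"
    by (simp only: unit_root_sum unit_root_mult mult_cancel_left simp_thms)
  also have "\<dots> \<longleftrightarrow> unit_root m (a + sum f S) = unit_root m (a * m)"
    by (simp only: unit_root_add[symmetric] am)
  also have "\<dots> \<longleftrightarrow> unit_root m (a + sum f S) = unit_root m 0"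
    using unit_root_self[of m] \<open>0 < m\<close> by (simp add: mult.commute[of a m] unit_root_mult)
  also have "\<dots> \<longleftrightarrow> (a + sum f S) mod m = 0"
    using unit_root_eq_iff[OF \<open>0 < m\<close>, of "a + sum f S" 0] by simp
  finally show ?thesis .
qed

definition real_tensor_apply ::
    "nat \<Rightarrow> nat \<Rightarrow> (nat list \<Rightarrow> real) \<Rightarrow> (nat \<Rightarrow> real) \<Rightarrow> nat \<Rightarrow> real" where
  "real_tensor_apply m n A x i = (\<Sum>js\<in>tuples n (m - 1). A (i # js) * (\<Prod>k<m - 1. x (js ! k)))"

lemma tensor_apply_of_real:
  "tensor_apply m n A (\<lambda>i. of_real (x i)) j = of_real (real_tensor_apply m n A x j)"
  unfolding tensor_apply_def real_tensor_apply_def by simp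

lemma incidence_sum: "set e \<subseteq> {..<n} \<Longrightarrow> (\<Sum>j<n. incidence e j * x j) = sum_list (map x e)"
  unfolding incidence_def by (simp add: sum_list_map_eq_sum_count2[of e "{..<n}"] count_mset)

lemma spectral_sym_eigenvalue_rotate:
  assumes "spectral_sym m n A l" and "is_eigenvalue m n A lam"
  shows "is_eigenvalue m n A (cis (2 * pi / real l) ^ k * lam)"
proof (induction k)
  case 0
  then show ?case using assms(2) by simp
next
  case (Suc k)
  then have "is_eigenvalue m n A (cis (2 * pi / real l) * (cis (2 * pi / real l) ^ k * lam))"
    using assms(1) unfolding spectral_sym_def by blast
  then show ?case
    by (simp add: mult.assoc)
qed

section \<open>A positive eigenvector\<close>

locale nonneg_weakly_irreducible_tensor =
  fixes m n :: nat and A :: "nat list \<Rightarrow> real"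
  assumes order_ge_2: "2 \<le> m" and dim_pos: "1 \<le> n"
    and nonneg: "nonneg_tensor m n A"
    and irreducible: "weakly_irreducible m n A"
begin

abbreviation "p \<equiv> m - 1"

abbreviation "T \<equiv> real_tensor_apply m n A"

abbreviation "D \<equiv> tensor_digraph m n A"

lemma entry_nonneg: "i < n \<Longrightarrow> js \<in> tuples n p \<Longrightarrow> 0 \<le> A (i # js)"
  using nonneg order_ge_2 unfolding nonneg_tensor_def tuples_def by auto

lemma arc_iff:
  "(i, j) \<in> D \<longleftrightarrow> i < n \<and> j < n \<and> (\<exists>js\<in>tuples n p. A (i # js) \<noteq> 0 \<and> j \<in> set js)"
  unfolding tensor_digraph_def by simp

lemma arc_closed_set_full:
  assumes "\<And>i j. (i, j) \<in> D \<Longrightarrow> i \<in> M \<Longrightarrow> j \<in> M" and "i0 \<in> M" "i0 < n" "j < n"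
  shows "j \<in> M"
  using irreducible rtrancl_leaves_set[of i0 j D M] assms
  unfolding weakly_irreducible_def by blast

lemma real_tensor_apply_cong: "(\<And>i. i < n \<Longrightarrow> x i = y i) \<Longrightarrow> T x j = T y j"
  unfolding real_tensor_apply_def
  by (intro sum.cong refl arg_cong2[where f="(*)"] prod.cong) (auto intro: tuples_nth)

lemma real_tensor_apply_homogeneous: "T (\<lambda>i. c * x i) j = c ^ p * T x j"
  unfolding real_tensor_apply_def by (simp add: prod.distrib sum_distrib_left mult_ac)

lemma real_tensor_apply_nonneg: "j < n \<Longrightarrow> (\<And>i. i < n \<Longrightarrow> 0 \<le> x i) \<Longrightarrow> 0 \<le> T x j"
  unfolding real_tensor_apply_def
  by (intro sum_nonneg mult_nonneg_nonneg prod_nonneg) (auto intro: tuples_nth entry_nonneg)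

lemma real_tensor_apply_mono:
  "j < n \<Longrightarrow> (\<And>i. i < n \<Longrightarrow> 0 \<le> x i \<and> x i \<le> y i) \<Longrightarrow> T x j \<le> T y j"
  unfolding real_tensor_apply_def
  by (intro sum_mono mult_left_mono prod_mono) (auto intro: tuples_nth entry_nonneg)

lemma real_tensor_apply_ge_term:
  assumes "i < n" "js \<in> tuples n p" "\<And>j. j < n \<Longrightarrow> 0 \<le> x j"
  shows "A (i # js) * (\<Prod>k<p. x (js ! k)) \<le> T x i"
  unfolding real_tensor_apply_def using assms
  by (intro member_le_sum finite_tuples mult_nonneg_nonneg prod_nonneg entry_nonneg)
     (auto intro: tuples_nth)

lemma real_tensor_apply_strict_mono:
  assumes "(c, d) \<in> D"
    and "\<And>i. i < n \<Longrightarrow> 0 \<le> x i \<and> x i \<le> y i" "\<And>i. i < n \<Longrightarrow> 0 < y i"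
    and "x d < y d"
  shows "T x c < T y c"
proof -
  from assms(1) obtain js where c: "c < n" and js: "js \<in> tuples n p" "A (c # js) \<noteq> 0" "d \<in> set js"
    unfolding arc_iff by blast
  then obtain k0 where k0: "k0 < p" "js ! k0 = d"
    by (auto simp: in_set_conv_nth length_tuples)
  have "(\<Prod>k<p. x (js ! k)) < (\<Prod>k<p. y (js ! k))"
    by (rule prod_less_prod[of _ _ _ k0]) (use assms(2-4) k0 tuples_nth[OF js(1)] in auto)
  moreover have "0 < A (c # js)"
    using entry_nonneg[OF c js(1)] js(2) by simp
  ultimately show ?thesis
    unfolding real_tensor_apply_def
    using assms(2) c js(1)
    by (intro sum_strict_mono_ex1 finite_tuples bexI[OF _ js(1)] ballI mult_strict_left_mono
          mult_left_mono prod_mono entry_nonneg) (auto intro: tuples_nth)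
qed

lemma tensor_apply_cong:
  "(\<And>i. i < n \<Longrightarrow> x i = y i) \<Longrightarrow> tensor_apply m n A x j = tensor_apply m n A y j"
  unfolding tensor_apply_def
  by (intro sum.cong refl arg_cong2[where f="(*)"] prod.cong) (auto intro: tuples_nth)

lemma tensor_apply_homogeneous:
  "tensor_apply m n A (\<lambda>i. c * x i) j = c ^ p * tensor_apply m n A x j"
  unfolding tensor_apply_def by (simp add: prod.distrib sum_distrib_left mult_ac)

lemma norm_tensor_apply_le:
  "j < n \<Longrightarrow> cmod (tensor_apply m n A y j) \<le> T (\<lambda>i. cmod (y i)) j"
  unfolding tensor_apply_def real_tensor_apply_def
  by (rule order.trans[OF norm_sum], rule sum_mono)
     (simp add: norm_mult prod_norm[symmetric] abs_of_nonneg entry_nonneg)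

lemma arc_term_bound:
  assumes "(i, j) \<in> D"
  obtains a where "0 < a"
    and "\<And>y i0. i0 < n \<Longrightarrow> \<forall>k<n. 0 < y k \<and> y i0 \<le> y k \<Longrightarrow> a * y j * y i0 ^ (p - 1) \<le> T y i"
proof -
  from assms obtain js where i: "i < n" and js: "js \<in> tuples n p" "A (i # js) \<noteq> 0" "j \<in> set js"
    unfolding arc_iff by blast
  obtain k0 where k0: "k0 < p" "js ! k0 = j"
    using js(3) by (auto simp: in_set_conv_nth length_tuples[OF js(1)])
  show thesis
  proof (rule that[of "A (i # js)"])
    show a: "0 < A (i # js)"
      using entry_nonneg[OF i js(1)] js(2) by simp
    fix y :: "nat \<Rightarrow> real" and i0
    assume i0: "i0 < n" and y: "\<forall>k<n. 0 < y k \<and> y i0 \<le> y k"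
    text \<open>Isolate the factor \<open>y j\<close> of the term of \<open>T y i\<close> indexed by \<open>js\<close>; its other factors
      are at least the minimum \<open>y i0\<close>.\<close>
    have "y j * y i0 ^ (p - 1) \<le> (\<Prod>k<p. y (js ! k))"
      using prod_ge_factor_mult_power[of "{..<p}" k0 "y i0" "\<lambda>k. y (js ! k)"]
        k0 y i0 tuples_nth[OF js(1)] by (auto intro: less_imp_le)
    then have "A (i # js) * y j * y i0 ^ (p - 1) \<le> A (i # js) * (\<Prod>k<p. y (js ! k))"
      using a by (simp add: mult.assoc)
    also have "\<dots> \<le> T y i"
      by (rule real_tensor_apply_ge_term[OF i js(1)]) (use y in \<open>auto intro: less_imp_le\<close>)
    finally show "A (i # js) * y j * y i0 ^ (p - 1) \<le> T y i" .
  qed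
qed

lemma subeigen_reach_bound:
  assumes "(i0, j) \<in> D\<^sup>*" and "i0 < n" and "0 \<le> \<beta>"
  shows "\<exists>c\<ge>0. \<forall>y. (\<forall>i<n. 0 < y i \<and> y i0 \<le> y i \<and> T y i \<le> \<beta> * y i ^ p) \<longrightarrow> y j \<le> c * y i0"
  using assms(1)
proof (induction rule: rtrancl_induct)
  case base
  then show ?case by (intro exI[of _ 1]) auto
next
  case (step i j)
  from step.IH obtain c where c: "0 \<le> c"
    "\<And>y. \<forall>i<n. 0 < y i \<and> y i0 \<le> y i \<and> T y i \<le> \<beta> * y i ^ p \<Longrightarrow> y i \<le> c * y i0"
    by blast
  obtain a where a: "0 < a"
    "\<And>y. \<forall>k<n. 0 < y k \<and> y i0 \<le> y k \<Longrightarrow> a * y j * y i0 ^ (p - 1) \<le> T y i"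
    using arc_term_bound[OF step.hyps(2)] assms(2) by metis
  have i: "i < n"
    using step.hyps(2) unfolding arc_iff by blast
  show ?case
  proof (intro exI[of _ "\<beta> * c ^ p / a"] conjI allI impI)
    show "0 \<le> \<beta> * c ^ p / a"
      using c a assms by simp
    fix y assume y: "\<forall>i<n. 0 < y i \<and> y i0 \<le> y i \<and> T y i \<le> \<beta> * y i ^ p"
    have y0: "0 < y i0"
      using y assms(2) by blast
    have "(a * y j) * y i0 ^ (p - 1) \<le> T y i"
      using a(2) y by simp
    also have "\<dots> \<le> \<beta> * y i ^ p"
      using y i by blast
    also have "\<dots> \<le> \<beta> * (c * y i0) ^ p"
      using c(2)[OF y] y i assms(3) by (intro mult_left_mono power_mono) auto
    also have "\<dots> = (\<beta> * c ^ p * y i0) * y i0 ^ (p - 1)"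
      using order_ge_2 by (cases p) (auto simp: power_mult_distrib)
    finally have "a * y j \<le> \<beta> * c ^ p * y i0"
      by (rule mult_right_le_imp_le[OF _ zero_less_power[OF y0]])
    then show "y j \<le> \<beta> * c ^ p / a * y i0"
      using a by (simp add: field_simps)
  qed
qed

lemma subeigen_uniform_bound:
  assumes "0 \<le> \<beta>"
  obtains C where "1 \<le> C"
    and "\<And>y i0 j. \<forall>i<n. 0 < y i \<and> y i0 \<le> y i \<and> T y i \<le> \<beta> * y i ^ p \<Longrightarrow> i0 < n \<Longrightarrow> j < n
      \<Longrightarrow> y j \<le> C * y i0"
proof -
  let ?P = "\<lambda>i0 y. \<forall>i<n. 0 < y i \<and> y i0 \<le> y i \<and> T y i \<le> \<beta> * y i ^ p"
  let ?I = "{..<n} \<times> {..<n}"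
  have "\<forall>ij\<in>?I. \<exists>c\<ge>0. \<forall>y. ?P (fst ij) y \<longrightarrow> y (snd ij) \<le> c * y (fst ij)"
    using subeigen_reach_bound[OF _ _ assms] irreducible unfolding weakly_irreducible_def by auto
  then obtain c where c: "\<And>ij. ij \<in> ?I \<Longrightarrow> 0 \<le> c ij"
    "\<And>ij y. ij \<in> ?I \<Longrightarrow> ?P (fst ij) y \<Longrightarrow> y (snd ij) \<le> c ij * y (fst ij)"
    by metis
  define C where "C = 1 + sum c ?I"
  show thesis
  proof
    show "1 \<le> C"
      unfolding C_def using c(1) by (simp add: sum_nonneg)
    fix y i0 j assume y: "?P i0 y" and ij: "i0 < n" "j < n"
    have "y j \<le> c (i0, j) * y i0"
      using c(2)[of "(i0, j)"] y ij by auto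
    also have "\<dots> \<le> C * y i0"
    proof (rule mult_right_mono)
      have "c (i0, j) \<le> sum c ?I"
        using ij c(1) by (intro member_le_sum) auto
      then show "c (i0, j) \<le> C"
        unfolding C_def by simp
      show "0 \<le> y i0"
        using y ij by (auto intro: less_imp_le)
    qed
    finally show "y j \<le> C * y i0" .
  qed
qed

definition collatz_wielandt :: "(nat \<Rightarrow> real) \<Rightarrow> real" where
  "collatz_wielandt x = Max ((\<lambda>i. T x i / x i ^ p) ` {..<n})"

lemma collatz_wielandt_le_iff:
  assumes "\<And>i. i < n \<Longrightarrow> 0 < x i"
  shows "collatz_wielandt x \<le> b \<longleftrightarrow> (\<forall>i<n. T x i \<le> b * x i ^ p)"
proof -
  have "collatz_wielandt x \<le> b \<longleftrightarrow> (\<forall>i<n. T x i / x i ^ p \<le> b)"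
    unfolding collatz_wielandt_def using dim_pos by (auto simp: Max_le_iff lessThan_empty_iff)
  also have "\<dots> \<longleftrightarrow> (\<forall>i<n. T x i \<le> b * x i ^ p)"
    using assms by (simp add: pos_divide_le_eq)
  finally show ?thesis .
qed

lemma collatz_wielandt_less_iff:
  assumes "\<And>i. i < n \<Longrightarrow> 0 < x i"
  shows "collatz_wielandt x < b \<longleftrightarrow> (\<forall>i<n. T x i < b * x i ^ p)"
proof -
  have "collatz_wielandt x < b \<longleftrightarrow> (\<forall>i<n. T x i / x i ^ p < b)"
    unfolding collatz_wielandt_def using dim_pos by (auto simp: Max_less_iff lessThan_empty_iff)
  also have "\<dots> \<longleftrightarrow> (\<forall>i<n. T x i < b * x i ^ p)"
    using assms by (simp add: pos_divide_less_eq)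
  finally show ?thesis .
qed

lemma collatz_wielandt_nonneg:
  assumes "\<And>i. i < n \<Longrightarrow> 0 < x i"
  shows "0 \<le> collatz_wielandt x"
proof -
  have "0 \<le> T x 0 / x 0 ^ p"
    using real_tensor_apply_nonneg[of 0 x] assms dim_pos by (simp add: less_imp_le)
  also have "\<dots> \<le> collatz_wielandt x"
    unfolding collatz_wielandt_def using dim_pos by (intro Max_ge) auto
  finally show ?thesis .
qed

lemma collatz_wielandt_scale:
  assumes "0 < c" and "\<And>i. i < n \<Longrightarrow> y i = c * x i"
  shows "collatz_wielandt y = collatz_wielandt x"
proof -
  have "T y i = c ^ p * T x i" for i
    using real_tensor_apply_cong[of y "\<lambda>i. c * x i"] assms(2) real_tensor_apply_homogeneous by simp
  then have "T y i / y i ^ p = T x i / x i ^ p" if "i < n" for i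
    using assms that by (simp add: power_mult_distrib)
  then show ?thesis
    unfolding collatz_wielandt_def by (intro arg_cong[where f=Max] image_cong) auto
qed

definition coord_box :: "real \<Rightarrow> (nat \<Rightarrow> real) set" where
  "coord_box C = {x. (\<forall>i<n. 1 \<le> x i \<and> x i \<le> C) \<and> (\<forall>i\<ge>n. x i = 0)}"

lemma compact_coord_box: "compact (coord_box C)"
proof -
  have "coord_box C = PiE UNIV (\<lambda>i. if i < n then {1..C} else {0})"
    unfolding set_eq_iff coord_box_def PiE_UNIV_domain Pi_iff
    by (simp add: all_conj_distrib not_less)
  then show ?thesis
    by (simp add: compact_PiE_UNIV)
qed

lemma continuous_on_collatz_wielandt: "continuous_on (coord_box C) collatz_wielandt"
proof -
  have "continuous_on (coord_box C) (\<lambda>x. T x i / x i ^ p)" if "i < n" for i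
    unfolding real_tensor_apply_def using that
    by (intro continuous_intros continuous_on_subset[OF continuous_on_product_coordinates])
       (auto simp: coord_box_def dest!: spec[of _ i])
  then show ?thesis
    unfolding collatz_wielandt_def using dim_pos
    by (intro continuous_on_Max_image) (auto simp: lessThan_empty_iff)
qed

text \<open>Rescaling by the least coordinate puts the sublevel sets of the Collatz-Wielandt function
  into a fixed compact box.\<close>
lemma collatz_wielandt_sublevel_normalized:
  assumes "0 \<le> \<beta>"
  obtains C where "1 \<le> C"
    and "\<And>y. (\<And>i. i < n \<Longrightarrow> 0 < y i) \<Longrightarrow> collatz_wielandt y \<le> \<beta> \<Longrightarrow>
      \<exists>z\<in>coord_box C. collatz_wielandt z = collatz_wielandt y"
proof -
  obtain C where C: "1 \<le> C"
    "\<And>y i0 j. \<forall>i<n. 0 < y i \<and> y i0 \<le> y i \<and> T y i \<le> \<beta> * y i ^ p \<Longrightarrow> i0 < n \<Longrightarrow> j < n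
      \<Longrightarrow> y j \<le> C * y i0"
    using subeigen_uniform_bound[OF assms] by blast
  show thesis
  proof (rule that[OF C(1)])
    fix y assume y: "\<And>i. i < n \<Longrightarrow> 0 < y i" and le: "collatz_wielandt y \<le> \<beta>"
    have "Min (y ` {..<n}) \<in> y ` {..<n}"
      using dim_pos by (intro Min_in) (auto simp: lessThan_empty_iff)
    then obtain i0 where i0: "i0 < n" "y i0 = Min (y ` {..<n})"
      by auto
    have min: "y i0 \<le> y i" if "i < n" for i
      using i0(2) that by simp
    have sub: "\<forall>i<n. 0 < y i \<and> y i0 \<le> y i \<and> T y i \<le> \<beta> * y i ^ p"
      using y min le collatz_wielandt_le_iff[OF y] by auto
    define z where "z = (\<lambda>i. if i < n then y i / y i0 else 0)"
    have "1 \<le> z i \<and> z i \<le> C" if "i < n" for i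
      using min[OF that] C(2)[OF sub i0(1) that] y[OF i0(1)] that
      by (simp add: z_def le_divide_eq divide_le_eq)
    then have "z \<in> coord_box C"
      by (simp add: coord_box_def z_def)
    moreover have "collatz_wielandt z = collatz_wielandt y"
      by (rule collatz_wielandt_scale[of "1 / y i0"]) (use y[OF i0(1)] in \<open>auto simp: z_def\<close>)
    ultimately show "\<exists>z\<in>coord_box C. collatz_wielandt z = collatz_wielandt y"
      by blast
  qed
qed

lemma collatz_wielandt_min_exists:
  obtains x where "\<And>i. i < n \<Longrightarrow> 0 < x i"
    and "\<And>y. (\<And>i. i < n \<Longrightarrow> 0 < y i) \<Longrightarrow> collatz_wielandt x \<le> collatz_wielandt y"
proof -
  define e where "e = (\<lambda>i. if i < n then 1 else 0 :: real)"
  have "\<And>i. i < n \<Longrightarrow> 0 < e i"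
    by (simp add: e_def)
  then obtain C where C: "1 \<le> C"
    "\<And>y. (\<And>i. i < n \<Longrightarrow> 0 < y i) \<Longrightarrow> collatz_wielandt y \<le> collatz_wielandt e \<Longrightarrow>
      \<exists>z\<in>coord_box C. collatz_wielandt z = collatz_wielandt y"
    using collatz_wielandt_sublevel_normalized[OF collatz_wielandt_nonneg[of e]] by blast
  have e: "e \<in> coord_box C"
    using C(1) by (simp add: coord_box_def e_def)
  then obtain x where x: "x \<in> coord_box C"
    and min: "\<And>z. z \<in> coord_box C \<Longrightarrow> collatz_wielandt x \<le> collatz_wielandt z"
    using continuous_attains_inf[OF compact_coord_box _ continuous_on_collatz_wielandt] by blast
  show thesis
  proof (rule that)
    show "0 < x i" if "i < n" for i
      using x that by (auto simp: coord_box_def dest!: spec[of _ i])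
    fix y :: "nat \<Rightarrow> real" assume y: "\<And>i. i < n \<Longrightarrow> 0 < y i"
    show "collatz_wielandt x \<le> collatz_wielandt y"
    proof (cases "collatz_wielandt y \<le> collatz_wielandt e")
      case True
      then show ?thesis
        using C(2)[of y, OF y] min by fastforce
    next
      case False
      then show ?thesis
        using min[OF e] by simp
    qed
  qed
qed

text \<open>Lowering the strict coordinates slightly keeps them strict and makes their in-neighbours
  strict as well.\<close>
lemma subeigen_decrement:
  assumes pos: "\<And>i. i < n \<Longrightarrow> 0 < y i" and sub: "\<And>i. i < n \<Longrightarrow> T y i \<le> r * y i ^ p"
  obtains y' where "\<And>i. i < n \<Longrightarrow> 0 < y' i" and "\<And>i. i < n \<Longrightarrow> T y' i \<le> r * y' i ^ p"
    and "\<And>i. i < n \<Longrightarrow> T y' i = r * y' i ^ p \<Longrightarrow> T y i = r * y i ^ p"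
    and "\<And>c d. (c, d) \<in> D \<Longrightarrow> T y d < r * y d ^ p \<Longrightarrow> T y' c < r * y' c ^ p"
proof -
  define J where "J = {i. i < n \<and> T y i < r * y i ^ p}"
  obtain \<delta> where \<delta>: "0 < \<delta>" "\<And>j. j \<in> J \<Longrightarrow> \<delta> < y j \<and> T y j < r * (y j - \<delta>) ^ p"
    using small_decrement_keeps_strict[of J y "T y" r p] pos unfolding J_def by auto
  define y' where "y' = (\<lambda>i. if i \<in> J then y i - \<delta> else y i)"
  have y'_le: "0 \<le> y' i \<and> y' i \<le> y i" if "i < n" for i
    using \<delta>(1) \<delta>(2)[of i] pos[OF that] unfolding y'_def by auto
  have T_le: "T y' i \<le> T y i" if "i < n" for i
    using real_tensor_apply_mono[OF that y'_le] .
  have strict: "T y' i < r * y' i ^ p" if "i \<in> J" for i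
    using T_le[of i] \<delta>(2)[OF that] that unfolding y'_def J_def by auto
  show thesis
  proof
    show "0 < y' i" if "i < n" for i
      using \<delta>(2)[of i] pos[OF that] unfolding y'_def by auto
    show "T y' i \<le> r * y' i ^ p" if "i < n" for i
      using T_le[OF that] strict[of i] sub[OF that] unfolding y'_def by (cases "i \<in> J") auto
    show "T y i = r * y i ^ p" if "i < n" "T y' i = r * y' i ^ p" for i
    proof (cases "i \<in> J")
      case True
      then show ?thesis
        using strict[OF True] that(2) by simp
    next
      case False
      then have "T y' i = r * y i ^ p"
        using that(2) by (simp add: y'_def)
      then show ?thesis
        using T_le[OF that(1)] sub[OF that(1)] by linarith
    qed
    fix c d assume arc: "(c, d) \<in> D" and "T y d < r * y d ^ p"
    then have "d \<in> J"
      unfolding J_def arc_iff by blast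
    show "T y' c < r * y' c ^ p"
    proof (cases "c \<in> J")
      case False
      have "T y' c < T y c"
        by (rule real_tensor_apply_strict_mono[OF arc y'_le pos]) (use \<open>d \<in> J\<close> \<delta> in \<open>auto simp: y'_def\<close>)
      moreover have "T y c \<le> r * y c ^ p"
        using sub arc unfolding arc_iff by blast
      moreover have "y' c = y c"
        using False by (simp add: y'_def)
      ultimately show ?thesis
        by simp
    qed (rule strict)
  qed
qed

lemma subeigen_shrink_tight_set:
  assumes pos: "\<And>i. i < n \<Longrightarrow> 0 < y i" and sub: "\<And>i. i < n \<Longrightarrow> T y i \<le> r * y i ^ p"
    and "c0 < n" "T y c0 = r * y c0 ^ p" and "d0 < n" "T y d0 < r * y d0 ^ p"
  obtains y' where "\<And>i. i < n \<Longrightarrow> 0 < y' i" and "\<And>i. i < n \<Longrightarrow> T y' i \<le> r * y' i ^ p"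
    and "{i. i < n \<and> T y' i = r * y' i ^ p} \<subset> {i. i < n \<and> T y i = r * y i ^ p}"
proof (rule subeigen_decrement[OF pos sub])
  fix y' assume y': "\<And>i. i < n \<Longrightarrow> 0 < y' i" "\<And>i. i < n \<Longrightarrow> T y' i \<le> r * y' i ^ p"
    and tight: "\<And>i. i < n \<Longrightarrow> T y' i = r * y' i ^ p \<Longrightarrow> T y i = r * y i ^ p"
    and arc_strict: "\<And>c d. (c, d) \<in> D \<Longrightarrow> T y d < r * y d ^ p \<Longrightarrow> T y' c < r * y' c ^ p"
  define I where "I = {i. i < n \<and> T y i = r * y i ^ p}"
  have "(c0, d0) \<in> D\<^sup>*"
    using irreducible assms(3,5) unfolding weakly_irreducible_def by blast
  then obtain c d where cd: "(c, d) \<in> D" "c \<in> I" "d \<notin> I"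
    using rtrancl_leaves_set[of c0 d0 D I] assms(3-6) unfolding I_def by auto
  then have "T y d < r * y d ^ p"
    using sub unfolding I_def arc_iff by force
  then have "c \<notin> {i. i < n \<and> T y' i = r * y' i ^ p}"
    using arc_strict[OF cd(1)] by auto
  moreover have "{i. i < n \<and> T y' i = r * y' i ^ p} \<subseteq> I"
    using tight unfolding I_def by blast
  ultimately have "{i. i < n \<and> T y' i = r * y' i ^ p} \<subset> I"
    using cd(2) by blast
  then show thesis
    unfolding I_def using y' that by blast
qed

lemma subeigen_tight_if_collatz_wielandt_lower:
  assumes lower: "\<And>z. (\<And>i. i < n \<Longrightarrow> 0 < z i) \<Longrightarrow> r \<le> collatz_wielandt z"
    and pos: "\<And>i. i < n \<Longrightarrow> 0 < y i" and sub: "\<And>i. i < n \<Longrightarrow> T y i \<le> r * y i ^ p"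
  shows "\<forall>i<n. T y i = r * y i ^ p"
  using pos sub
proof (induction "card {i. i < n \<and> T y i = r * y i ^ p}" arbitrary: y rule: less_induct)
  case less
  show ?case
  proof (rule ccontr)
    assume "\<not> (\<forall>i<n. T y i = r * y i ^ p)"
    then obtain d0 where d0: "d0 < n" "T y d0 < r * y d0 ^ p"
      using less.prems(2) by (meson less_le)
    show False
    proof (cases "\<exists>c0<n. T y c0 = r * y c0 ^ p")
      case True
      then obtain c0 where "c0 < n" "T y c0 = r * y c0 ^ p"
        by blast
      then obtain y' where y': "\<And>i. i < n \<Longrightarrow> 0 < y' i" "\<And>i. i < n \<Longrightarrow> T y' i \<le> r * y' i ^ p"
        and tight: "{i. i < n \<and> T y' i = r * y' i ^ p} \<subset> {i. i < n \<and> T y i = r * y i ^ p}"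
        using subeigen_shrink_tight_set[OF less.prems _ _ d0] by blast
      then have "card {i. i < n \<and> T y' i = r * y' i ^ p} < card {i. i < n \<and> T y i = r * y i ^ p}"
        by (intro psubset_card_mono) auto
      from less.hyps[OF this y'] tight show False
        by auto
    next
      case False
      then have "collatz_wielandt y < r"
        using collatz_wielandt_less_iff[OF less.prems(1)] less.prems(2) by (meson less_le)
      then show False
        using lower[of y, OF less.prems(1)] by simp
    qed
  qed
qed

lemma positive_eigenvector_exists:
  obtains v r where "\<And>i. i < n \<Longrightarrow> 0 < v i" and "\<And>i. n \<le> i \<Longrightarrow> v i = 0" and "v 0 = 1"
    and "\<And>i. i < n \<Longrightarrow> T v i = r * v i ^ p"
proof -
  obtain x where x: "\<And>i. i < n \<Longrightarrow> 0 < x i"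
    and min: "\<And>y. (\<And>i. i < n \<Longrightarrow> 0 < y i) \<Longrightarrow> collatz_wielandt x \<le> collatz_wielandt y"
    using collatz_wielandt_min_exists by blast
  have eig: "\<forall>i<n. T x i = collatz_wielandt x * x i ^ p"
    using subeigen_tight_if_collatz_wielandt_lower[of "collatz_wielandt x" x, OF min x]
      collatz_wielandt_le_iff[of x, OF x] by blast
  have x0: "0 < x 0"
    using x dim_pos by simp
  define v where "v = (\<lambda>i. if i < n then x i / x 0 else 0)"
  show thesis
  proof (rule that[of v "collatz_wielandt x"])
    show "0 < v i" if "i < n" for i
      using x[OF that] x0 that by (simp add: v_def)
    show "T v i = collatz_wielandt x * v i ^ p" if "i < n" for i
    proof -
      have "T v i = T (\<lambda>i. 1 / x 0 * x i) i"
        by (rule real_tensor_apply_cong) (simp add: v_def)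
      also have "\<dots> = (1 / x 0) ^ p * T x i"
        by (rule real_tensor_apply_homogeneous)
      finally have "T v i = (1 / x 0) ^ p * T x i" .
      then show ?thesis
        using eig that by (simp add: v_def power_divide)
    qed
  qed (use x0 dim_pos in \<open>auto simp: v_def\<close>)
qed

end

section \<open>Peripheral eigenvectors and their phases\<close>

locale perron_tensor = nonneg_weakly_irreducible_tensor +
  fixes v :: "nat \<Rightarrow> real" and r :: real
  assumes perron_pos: "\<And>i. i < n \<Longrightarrow> 0 < v i" and perron_zero: "\<And>i. n \<le> i \<Longrightarrow> v i = 0"
    and perron_0: "v 0 = 1" and perron_eigen: "\<And>i. i < n \<Longrightarrow> T v i = r * v i ^ p"
begin

lemma perron_root_nonneg: "0 \<le> r"
proof -
  have "0 \<le> T v 0"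
    using dim_pos perron_pos by (intro real_tensor_apply_nonneg) (auto intro: less_imp_le)
  then show ?thesis
    using perron_eigen[of 0] dim_pos perron_0 by simp
qed

lemma perron_root_pos:
  assumes "i < n" "js \<in> tuples n p" "A (i # js) \<noteq> 0"
  shows "0 < r"
proof -
  have "0 < A (i # js) * (\<Prod>k<p. v (js ! k))"
    using entry_nonneg[OF assms(1,2)] assms(3) perron_pos tuples_nth[OF assms(2)]
    by (intro mult_pos_pos prod_pos) auto
  also have "\<dots> \<le> r * v i ^ p"
    using real_tensor_apply_ge_term[OF assms(1,2), of v] perron_pos perron_eigen[OF assms(1)]
    by (simp add: less_imp_le)
  finally show ?thesis
    using perron_pos[OF assms(1)] by (simp add: zero_less_mult_iff)
qed

lemma perron_eigenpair: "is_eigenpair m n A (of_real r) (\<lambda>i. of_real (v i))"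
  unfolding is_eigenpair_def tensor_apply_of_real
  using dim_pos perron_0 perron_eigen by (intro conjI exI[of _ 0]) auto

lemma eigenpair_norm_sub:
  assumes "is_eigenpair m n A lam y" "i < n"
  shows "cmod lam * cmod (y i) ^ p \<le> T (\<lambda>j. cmod (y j)) i"
proof -
  have "cmod lam * cmod (y i) ^ p = cmod (tensor_apply m n A y i)"
    using assms unfolding is_eigenpair_def by (simp add: norm_mult norm_power)
  also have "\<dots> \<le> T (\<lambda>j. cmod (y j)) i"
    by (rule norm_tensor_apply_le[OF assms(2)])
  finally show ?thesis .
qed

lemma least_dominating_multiple:
  assumes "is_eigenpair m n A lam y"
  obtains t i0 where "0 < t" and "i0 < n" and "\<And>i. i < n \<Longrightarrow> cmod (y i) \<le> t * v i"
    and "cmod (y i0) = t * v i0"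
proof -
  define t where "t = Max ((\<lambda>i. cmod (y i) / v i) ` {..<n})"
  have "t \<in> (\<lambda>i. cmod (y i) / v i) ` {..<n}"
    unfolding t_def using dim_pos by (intro Max_in) (auto simp: lessThan_empty_iff)
  then obtain i0 where i0: "i0 < n" "t = cmod (y i0) / v i0"
    by auto
  have le: "cmod (y i) / v i \<le> t" if "i < n" for i
    unfolding t_def using that by (intro Max_ge) auto
  from assms obtain i1 where i1: "i1 < n" "y i1 \<noteq> 0"
    unfolding is_eigenpair_def by blast
  show thesis
  proof
    have "0 < cmod (y i1) / v i1"
      using i1 perron_pos[OF i1(1)] by simp
    then show "0 < t"
      using le[OF i1(1)] by linarith
    show "cmod (y i) \<le> t * v i" if "i < n" for i
      using le[OF that] perron_pos[OF that] by (simp add: divide_le_eq)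
    show "cmod (y i0) = t * v i0"
      using i0 perron_pos[OF i0(1)] by simp
  qed (rule i0(1))
qed

lemma eigenvalue_norm_le:
  assumes "is_eigenpair m n A lam y"
  shows "cmod lam \<le> r"
proof -
  obtain t i0 where t: "0 < t" "i0 < n" "\<And>i. i < n \<Longrightarrow> cmod (y i) \<le> t * v i"
    "cmod (y i0) = t * v i0"
    using least_dominating_multiple[OF assms] by blast
  have "cmod lam * cmod (y i0) ^ p \<le> T (\<lambda>j. cmod (y j)) i0"
    by (rule eigenpair_norm_sub[OF assms t(2)])
  also have "\<dots> \<le> T (\<lambda>j. t * v j) i0"
    using t(2,3) by (intro real_tensor_apply_mono) auto
  also have "\<dots> = r * cmod (y i0) ^ p"
    using real_tensor_apply_homogeneous perron_eigen[OF t(2)] t(4) by (simp add: power_mult_distrib)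
  finally show ?thesis
    using t(1,4) perron_pos[OF t(2)] by simp
qed

lemma eigenvector_norm_proportional:
  assumes "is_eigenpair m n A lam y" and "cmod lam = r"
  obtains t where "0 < t" and "\<And>i. i < n \<Longrightarrow> cmod (y i) = t * v i"
proof -
  obtain t i0 where t: "0 < t" "i0 < n" "\<And>i. i < n \<Longrightarrow> cmod (y i) \<le> t * v i"
    "cmod (y i0) = t * v i0"
    using least_dominating_multiple[OF assms(1)] by blast
  have dom: "0 \<le> cmod (y i) \<and> cmod (y i) \<le> t * v i" if "i < n" for i
    using t(3)[OF that] by simp
  text \<open>If \<open>|y|\<close> touches \<open>t v\<close> at \<open>i\<close>, then strict monotonicity forces it to touch at the
    out-neighbours of \<open>i\<close>.\<close>
  have "j \<in> {i. i < n \<and> cmod (y i) = t * v i}"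
  if "(i, j) \<in> D" "i \<in> {i. i < n \<and> cmod (y i) = t * v i}" for i j
  proof (rule ccontr)
    assume "j \<notin> {i. i < n \<and> cmod (y i) = t * v i}"
    moreover have j: "j < n"
      using that(1) unfolding arc_iff by blast
    ultimately have "cmod (y j) < t * v j"
      using dom[OF j] by auto
    then have "T (\<lambda>j. cmod (y j)) i < T (\<lambda>j. t * v j) i"
      using that(1) dom perron_pos t(1) by (intro real_tensor_apply_strict_mono) auto
    also have "\<dots> = cmod lam * cmod (y i) ^ p"
      using that(2) real_tensor_apply_homogeneous perron_eigen assms(2) by (simp add: power_mult_distrib)
    also have "\<dots> \<le> T (\<lambda>j. cmod (y j)) i"
      using that(2) by (intro eigenpair_norm_sub[OF assms(1)]) simp
    finally show False
      by simp
  qed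
  then show thesis
    using that[OF t(1)] arc_closed_set_full[of "{i. i < n \<and> cmod (y i) = t * v i}" i0] t(2,4)
    by blast
qed

lemma spectral_radius_eq: "spectral_radius m n A = r"
  unfolding spectral_radius_def
proof (rule cSup_eq_maximum)
  show "r \<in> {cmod lam |lam. is_eigenvalue m n A lam}"
    using perron_eigenpair perron_root_nonneg unfolding is_eigenvalue_def by force
qed (auto simp: is_eigenvalue_def intro: eigenvalue_norm_le)

lemma normalized_eigvecs_nonempty:
  assumes "is_eigenvalue m n A lam" and "cmod lam = r"
  obtains y where "y \<in> normalized_eigvecs m n A lam"
proof -
  obtain x where x: "is_eigenpair m n A lam x"
    using assms(1) unfolding is_eigenvalue_def by blast
  obtain t where t: "0 < t" "\<And>i. i < n \<Longrightarrow> cmod (x i) = t * v i"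
    using eigenvector_norm_proportional[OF x assms(2)] by blast
  have x0: "x 0 \<noteq> 0"
    using t perron_0 dim_pos by force
  define y where "y = (\<lambda>i. if i < n then x i / x 0 else 0)"
  have "tensor_apply m n A y i = lam * y i ^ p" if "i < n" for i
  proof -
    have "tensor_apply m n A y i = tensor_apply m n A (\<lambda>i. 1 / x 0 * x i) i"
      by (rule tensor_apply_cong) (simp add: y_def)
    also have "\<dots> = (1 / x 0) ^ p * (lam * x i ^ p)"
      using x that unfolding tensor_apply_homogeneous is_eigenpair_def by simp
    finally show ?thesis
      using that by (simp add: y_def power_divide)
  qed
  moreover have "y 0 = 1"
    using x0 dim_pos by (simp add: y_def)
  ultimately have "y \<in> normalized_eigvecs m n A lam"
    using dim_pos unfolding normalized_eigvecs_def is_eigenpair_def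
    by (auto simp: y_def intro: exI[of _ 0])
  then show thesis ..
qed

definition polar :: "(nat \<Rightarrow> complex) \<Rightarrow> nat \<Rightarrow> complex" where
  "polar d = (\<lambda>i. if i < n then of_real (v i) * d i else 0)"

text \<open>\<open>diag_similar c d\<close> states entrywise that \<open>A = c\<inverse> D^-(m-1) A D\<close> for \<open>D = diag d\<close>, the
  diagonal similarity through which the paper describes the eigenvectors of modulus \<open>\<rho>\<close>.\<close>
definition diag_similar :: "complex \<Rightarrow> (nat \<Rightarrow> complex) \<Rightarrow> bool" where
  "diag_similar c d \<longleftrightarrow>
     (\<forall>i js. i < n \<longrightarrow> js \<in> tuples n p \<longrightarrow> A (i # js) \<noteq> 0 \<longrightarrow> (\<Prod>k<p. d (js ! k)) = c * d i ^ p)"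

lemma polar_cong: "(\<And>i. i < n \<Longrightarrow> d i = d' i) \<Longrightarrow> polar d = polar d'"
  unfolding polar_def by auto

lemma sgn_polar: "i < n \<Longrightarrow> cmod (d i) = 1 \<Longrightarrow> sgn (polar d i) = d i"
  using perron_pos[of i] by (simp add: polar_def sgn_mult sgn_of_real) (simp add: sgn_eq)

lemma polar_sgn:
  assumes "\<And>i. i < n \<Longrightarrow> cmod (y i) = v i" and "\<And>i. n \<le> i \<Longrightarrow> y i = 0"
  shows "polar (\<lambda>i. sgn (y i)) = y"
proof
  fix i show "polar (\<lambda>i. sgn (y i)) i = y i"
    using assms of_real_norm_mult_sgn[of "y i"] by (cases "i < n") (auto simp: polar_def)
qed

lemma tensor_apply_polar:
  "tensor_apply m n A (polar d) i =
     (\<Sum>js\<in>tuples n p. of_real (A (i # js) * (\<Prod>k<p. v (js ! k))) * (\<Prod>k<p. d (js ! k)))"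
  unfolding tensor_apply_def
proof (rule sum.cong[OF refl])
  fix js assume js: "js \<in> tuples n p"
  have "(\<Prod>k<p. polar d (js ! k)) = (\<Prod>k<p. of_real (v (js ! k)) * d (js ! k))"
    using tuples_nth[OF js] by (intro prod.cong) (auto simp: polar_def)
  then show "of_real (A (i # js)) * (\<Prod>k<m - 1. polar d (js ! k)) =
      of_real (A (i # js) * (\<Prod>k<p. v (js ! k))) * (\<Prod>k<p. d (js ! k))"
    by (simp add: prod.distrib)
qed

lemma diag_similar_imp_eigen:
  assumes "diag_similar c d" and "i < n"
  shows "tensor_apply m n A (polar d) i = (c * r) * polar d i ^ p"
proof -
  have "tensor_apply m n A (polar d) i =
      (\<Sum>js\<in>tuples n p. of_real (A (i # js) * (\<Prod>k<p. v (js ! k))) * (c * d i ^ p))"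
    unfolding tensor_apply_polar
  proof (rule sum.cong[OF refl])
    fix js assume "js \<in> tuples n p"
    then show "of_real (A (i # js) * (\<Prod>k<p. v (js ! k))) * (\<Prod>k<p. d (js ! k)) =
        of_real (A (i # js) * (\<Prod>k<p. v (js ! k))) * (c * d i ^ p)"
      using assms unfolding diag_similar_def by (cases "A (i # js) = 0") auto
  qed
  also have "\<dots> = of_real (T v i) * (c * d i ^ p)"
    unfolding real_tensor_apply_def by (simp add: sum_distrib_right)
  also have "\<dots> = (c * r) * polar d i ^ p"
    using perron_eigen[OF assms(2)] assms(2) by (simp add: polar_def power_mult_distrib)
  finally show ?thesis .
qed

text \<open>Equality case of the triangle inequality \<open>|A y^(m-1)| \<le> A |y|^(m-1)\<close>: all terms with a
  nonzero coefficient have the same phase.\<close>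
lemma eigen_imp_diag_similar:
  assumes lam: "cmod lam = r" and unimodular: "\<And>i. i < n \<Longrightarrow> cmod (d i) = 1"
    and eig: "\<And>i. i < n \<Longrightarrow> tensor_apply m n A (polar d) i = lam * polar d i ^ p"
  shows "diag_similar (lam / r) d"
  unfolding diag_similar_def
proof (intro allI impI)
  fix i js assume i: "i < n" and js: "js \<in> tuples n p" and "A (i # js) \<noteq> 0"
  then have r: "0 < r"
    by (rule perron_root_pos)
  define w where "w = (\<lambda>ks. A (i # ks) * (\<Prod>k<p. v (ks ! k)))"
  have w_nonneg: "0 \<le> w ks" if "ks \<in> tuples n p" for ks
    unfolding w_def using entry_nonneg[OF i that] perron_pos tuples_nth[OF that]
    by (intro mult_nonneg_nonneg prod_nonneg) (auto intro: less_imp_le)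
  have "0 < w js"
    unfolding w_def using entry_nonneg[OF i js] \<open>A (i # js) \<noteq> 0\<close> perron_pos tuples_nth[OF js]
    by (intro mult_pos_pos prod_pos) auto
  moreover have "cmod (\<Prod>k<p. d (ks ! k)) \<le> 1" if ks: "ks \<in> tuples n p" for ks
    unfolding prod_norm[symmetric] using unimodular tuples_nth[OF ks] by simp
  moreover have "cmod (lam / r * d i ^ p) = 1"
    using lam r unimodular[OF i] by (simp add: norm_mult norm_power norm_divide)
  moreover have "(\<Sum>ks\<in>tuples n p. of_real (w ks) * (\<Prod>k<p. d (ks ! k))) =
      lam / r * d i ^ p * of_real (\<Sum>ks\<in>tuples n p. w ks)"
  proof -
    have "(\<Sum>ks\<in>tuples n p. of_real (w ks) * (\<Prod>k<p. d (ks ! k))) = lam * polar d i ^ p"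
      using eig[OF i] unfolding tensor_apply_polar w_def .
    also have "\<dots> = lam / r * d i ^ p * of_real (r * v i ^ p)"
      using r i by (simp add: polar_def power_mult_distrib)
    also have "r * v i ^ p = (\<Sum>ks\<in>tuples n p. w ks)"
      using perron_eigen[OF i] unfolding real_tensor_apply_def w_def by simp
    finally show ?thesis .
  qed
  ultimately show "(\<Prod>k<p. d (js ! k)) = lam / r * d i ^ p"
    using w_nonneg by (intro weighted_sum_unimodular_eq_imp_eq[OF finite_tuples _ _ _ _ js])
qed

lemma diag_similar_cong:
  assumes "diag_similar c d" and "0 < r \<Longrightarrow> c = c'" and "\<And>i. i < n \<Longrightarrow> d i = d' i"
  shows "diag_similar c' d'"
  unfolding diag_similar_def
proof (intro allI impI)
  fix i js assume i: "i < n" and js: "js \<in> tuples n p" and nz: "A (i # js) \<noteq> 0"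
  have "(\<Prod>k<p. d' (js ! k)) = (\<Prod>k<p. d (js ! k))"
    using assms(3) tuples_nth[OF js] by (intro prod.cong) auto
  also have "\<dots> = c * d i ^ p"
    using assms(1) i js nz unfolding diag_similar_def by blast
  finally show "(\<Prod>k<p. d' (js ! k)) = c' * d' i ^ p"
    using assms(2) perron_root_pos[OF i js nz] assms(3)[OF i] by simp
qed

lemma diag_similar_mult:
  "diag_similar c d \<Longrightarrow> diag_similar c' e \<Longrightarrow> diag_similar (c * c') (\<lambda>i. d i * e i)"
  unfolding diag_similar_def by (simp add: prod.distrib power_mult_distrib mult_ac)

lemma diag_similar_cnj: "diag_similar c d \<Longrightarrow> diag_similar (cnj c) (\<lambda>i. cnj (d i))"
  unfolding diag_similar_def by (simp flip: cnj_prod)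

lemma norm_normalized_eigvec:
  assumes "y \<in> normalized_eigvecs m n A lam" and "cmod lam = r" and "i < n"
  shows "cmod (y i) = v i"
proof -
  obtain t where t: "0 < t" "\<And>i. i < n \<Longrightarrow> cmod (y i) = t * v i"
    using eigenvector_norm_proportional[of lam y] assms(1,2) unfolding normalized_eigvecs_def by blast
  moreover have "y 0 = 1"
    using assms(1) unfolding normalized_eigvecs_def by simp
  ultimately have "t = 1"
    using t(2)[of 0] perron_0 dim_pos by simp
  then show ?thesis
    using t(2)[OF assms(3)] by simp
qed

lemma normalized_eigvecs_iff:
  assumes lam: "cmod lam = r"
  shows "y \<in> normalized_eigvecs m n A lam \<longleftrightarrow>
    (\<exists>d. (\<forall>i<n. cmod (d i) = 1) \<and> d 0 = 1 \<and> diag_similar (lam / r) d \<and> y = polar d)"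
proof
  assume y: "y \<in> normalized_eigvecs m n A lam"
  then have eig: "is_eigenpair m n A lam y" and y0: "y 0 = 1" and zero: "\<And>i. n \<le> i \<Longrightarrow> y i = 0"
    unfolding normalized_eigvecs_def by auto
  have norm_y: "\<And>i. i < n \<Longrightarrow> cmod (y i) = v i"
    using norm_normalized_eigvec[OF y lam] .
  define d where "d = (\<lambda>i. sgn (y i))"
  have d: "cmod (d i) = 1" if "i < n" for i
    using norm_y[OF that] perron_pos[OF that] by (auto simp: d_def norm_sgn)
  have y_polar: "y = polar d"
    unfolding d_def using polar_sgn[OF norm_y zero] by simp
  have "diag_similar (lam / r) d"
    using eig y_polar lam d by (intro eigen_imp_diag_similar) (auto simp: is_eigenpair_def)
  moreover have "d 0 = 1"
    using y0 by (simp add: d_def)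
  ultimately show "\<exists>d. (\<forall>i<n. cmod (d i) = 1) \<and> d 0 = 1 \<and> diag_similar (lam / r) d \<and> y = polar d"
    using d y_polar by blast
next
  assume "\<exists>d. (\<forall>i<n. cmod (d i) = 1) \<and> d 0 = 1 \<and> diag_similar (lam / r) d \<and> y = polar d"
  then obtain d where d: "\<And>i. i < n \<Longrightarrow> cmod (d i) = 1" "d 0 = 1" "diag_similar (lam / r) d"
    and y: "y = polar d"
    by blast
  have "lam / r * r = lam"
    using lam by (cases "r = 0") auto
  then have eig: "\<And>i. i < n \<Longrightarrow> tensor_apply m n A y i = lam * y i ^ p"
    using diag_similar_imp_eigen[OF d(3)] y by simp
  have "y 0 = 1"
    using y d(2) perron_0 dim_pos by (simp add: polar_def)
  then show "y \<in> normalized_eigvecs m n A lam"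
    using eig dim_pos y unfolding normalized_eigvecs_def is_eigenpair_def
    by (auto simp: polar_def intro: exI[of _ 0])
qed

lemma PV0_iff:
  "y \<in> PV0 m n A \<longleftrightarrow> (\<exists>d. (\<forall>i<n. cmod (d i) = 1) \<and> d 0 = 1 \<and> diag_similar 1 d \<and> y = polar d)"
proof -
  have "diag_similar (of_real r / of_real r) d \<longleftrightarrow> diag_similar 1 d" for d
    by (auto elim!: diag_similar_cong)
  then show ?thesis
    unfolding PV0_def spectral_radius_eq
    using normalized_eigvecs_iff[of "of_real r"] perron_root_nonneg by simp
qed

lemma vp_eq: "vp m n A = polar (\<lambda>_. 1)"
  unfolding vp_def
proof (rule the_equality)
  show "polar (\<lambda>_. 1) \<in> PV0 m n A \<and> (\<forall>i<n. Im (polar (\<lambda>_. 1) i) = 0 \<and> 0 < Re (polar (\<lambda>_. 1) i))"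
    unfolding PV0_iff diag_similar_def using perron_pos
    by (intro conjI exI[of _ "\<lambda>_. 1"]) (auto simp: polar_def)
  fix w assume w: "w \<in> PV0 m n A \<and> (\<forall>i<n. Im (w i) = 0 \<and> 0 < Re (w i))"
  then obtain d where d: "\<And>i. i < n \<Longrightarrow> cmod (d i) = 1" and "w = polar d"
    unfolding PV0_iff by blast
  have "d i = 1" if "i < n" for i
  proof -
    have "sgn (w i) = d i"
      using sgn_polar[of i d, OF that d[OF that]] \<open>w = polar d\<close> by simp
    moreover have "Im (w i) = 0" "0 < Re (w i)"
      using w that by auto
    then have "sgn (w i) = 1"
      by (simp add: sgn_eq complex_eq_iff cmod_eq_Re)
    ultimately show ?thesis
      by simp
  qed
  then show "w = polar (\<lambda>_. 1)"
    using \<open>w = polar d\<close> by (auto intro: polar_cong)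
qed

lemma pv_comp_polar:
  assumes "\<And>i. i < n \<Longrightarrow> cmod (d i) = 1" and "\<And>i. i < n \<Longrightarrow> cmod (e i) = 1"
  shows "pv_comp m n A (polar d) (polar e) = polar (\<lambda>i. d i * e i)"
proof
  fix i show "pv_comp m n A (polar d) (polar e) i = polar (\<lambda>i. d i * e i) i"
    using assms sgn_polar[of i d] sgn_polar[of i e]
    by (cases "i < n") (simp_all add: pv_comp_def vp_eq polar_def flip: sgn_eq)
qed

lemma pv_comp_mem_normalized_eigvecs:
  assumes lam: "cmod lam = r" and "y \<in> normalized_eigvecs m n A lam" and "z \<in> PV0 m n A"
  shows "pv_comp m n A y z \<in> normalized_eigvecs m n A lam"
proof -
  obtain d where d: "\<And>i. i < n \<Longrightarrow> cmod (d i) = 1" "d 0 = 1" "diag_similar (lam / r) d"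
    and y: "y = polar d"
    using assms(2) unfolding normalized_eigvecs_iff[OF lam] by blast
  obtain e where e: "\<And>i. i < n \<Longrightarrow> cmod (e i) = 1" "e 0 = 1" "diag_similar 1 e"
    and z: "z = polar e"
    using assms(3) unfolding PV0_iff by blast
  have "pv_comp m n A y z = polar (\<lambda>i. d i * e i)"
    unfolding y z by (rule pv_comp_polar[OF d(1) e(1)])
  moreover have "diag_similar (lam / r) (\<lambda>i. d i * e i)"
    using diag_similar_mult[OF d(3) e(3)] by simp
  ultimately show ?thesis
    unfolding normalized_eigvecs_iff[OF lam] using d e
    by (intro exI[of _ "\<lambda>i. d i * e i"]) (auto simp: norm_mult)
qed

text \<open>Multiplying by the conjugate phases of \<open>y\<close> carries the normalized eigenvectors of
  \<open>\<lambda>\<close> into \<open>\<bbbP>\<bbbV>\<^sub>0\<close>.\<close>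
lemma normalized_eigvecs_pv_comp_PV0:
  assumes lam: "cmod lam = r" and "y \<in> normalized_eigvecs m n A lam"
    and "w \<in> normalized_eigvecs m n A lam"
  obtains z where "z \<in> PV0 m n A" and "pv_comp m n A y z = w"
proof -
  obtain d where d: "\<And>i. i < n \<Longrightarrow> cmod (d i) = 1" "d 0 = 1" "diag_similar (lam / r) d"
    and y: "y = polar d"
    using assms(2) unfolding normalized_eigvecs_iff[OF lam] by blast
  obtain d' where d': "\<And>i. i < n \<Longrightarrow> cmod (d' i) = 1" "d' 0 = 1" "diag_similar (lam / r) d'"
    and w: "w = polar d'"
    using assms(3) unfolding normalized_eigvecs_iff[OF lam] by blast
  define e where "e = (\<lambda>i. cnj (d i) * d' i)"
  have e: "\<And>i. i < n \<Longrightarrow> cmod (e i) = 1"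
    using d(1) d'(1) by (simp add: e_def norm_mult)
  have "diag_similar (cnj (lam / r) * (lam / r)) e"
    unfolding e_def by (intro diag_similar_mult diag_similar_cnj d(3) d'(3))
  then have "diag_similar 1 e"
  proof (rule diag_similar_cong)
    assume "0 < r"
    then have "cmod (lam / r) = 1"
      using lam by (simp add: norm_divide)
    then show "cnj (lam / r) * (lam / r) = 1"
      by (rule cnj_mult_self_unimodular)
  qed simp
  then have "polar e \<in> PV0 m n A"
    unfolding PV0_iff using e d(2) d'(2) by (intro exI[of _ e]) (simp add: e_def)
  moreover have "pv_comp m n A y (polar e) = w"
  proof -
    have "pv_comp m n A y (polar e) = polar (\<lambda>i. d i * e i)"
      unfolding y by (rule pv_comp_polar[OF d(1) e])
    also have "\<dots> = w"
      unfolding w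
    proof (rule polar_cong)
      fix i assume "i < n"
      have "d i * e i = (cnj (d i) * d i) * d' i"
        by (simp add: e_def ac_simps)
      then show "d i * e i = d' i"
        using cnj_mult_self_unimodular[OF d(1)[OF \<open>i < n\<close>]] by simp
    qed
    finally show ?thesis .
  qed
  ultimately show thesis
    using that by blast
qed

lemma normalized_eigvecs_coset:
  assumes "cmod lam = r" and "y \<in> normalized_eigvecs m n A lam"
  shows "normalized_eigvecs m n A lam = pv_comp m n A y ` PV0 m n A"
proof
  show "normalized_eigvecs m n A lam \<subseteq> pv_comp m n A y ` PV0 m n A"
  proof
    fix w assume "w \<in> normalized_eigvecs m n A lam"
    then obtain z where "z \<in> PV0 m n A" "pv_comp m n A y z = w"
      using normalized_eigvecs_pv_comp_PV0[OF assms] by blast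
    then show "w \<in> pv_comp m n A y ` PV0 m n A"
      by blast
  qed
  show "pv_comp m n A y ` PV0 m n A \<subseteq> normalized_eigvecs m n A lam"
    using pv_comp_mem_normalized_eigvecs[OF assms] by blast
qed

lemma PV_j_coset:
  assumes "spectral_sym m n A l"
  shows "\<exists>y\<in>PV_j m n A l j. PV_j m n A l j = pv_comp m n A y ` PV0 m n A"
proof -
  have lam: "lam_j m n A l j = cis (2 * pi / real l) ^ j * of_real r"
    unfolding lam_j_def spectral_radius_eq by (simp add: Complex.DeMoivre mult_ac)
  have "is_eigenvalue m n A (of_real r)"
    using perron_eigenpair unfolding is_eigenvalue_def by blast
  then have eigenvalue: "is_eigenvalue m n A (lam_j m n A l j)"
    unfolding lam by (rule spectral_sym_eigenvalue_rotate[OF assms])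
  have norm: "cmod (lam_j m n A l j) = r"
    using perron_root_nonneg unfolding lam by (simp add: norm_mult norm_power)
  obtain y where "y \<in> normalized_eigvecs m n A (lam_j m n A l j)"
    using normalized_eigvecs_nonempty[OF eigenvalue norm] by blast
  then show ?thesis
    unfolding PV_j_def using normalized_eigvecs_coset[OF norm] by blast
qed

end

section \<open>The phases of \<open>\<bbbP>\<bbbV>\<^sub>0\<close> and the incidence matrix\<close>

locale comb_symmetric_perron_tensor = perron_tensor +
  assumes comb_symmetric: "comb_symmetric m n A"
begin

lemma order_eq_Suc: "m = Suc p"
  using order_ge_2 by simp

lemma nonzero_entry_perm:
  assumes "i # js \<in> tuples n m" and "mset js' = mset (i # js)"
  shows "A js' \<noteq> 0 \<longleftrightarrow> A (i # js) \<noteq> 0"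
  using comb_symmetric assms unfolding comb_symmetric_def by blast

lemma nonzero_entry_rotate:
  assumes "i < n" "js \<in> tuples n p" "A (i # js) \<noteq> 0" "j \<in> set js"
  obtains js' where "js' \<in> tuples n p" "A (j # js') \<noteq> 0" "mset (j # js') = mset (i # js)"
proof
  let ?js' = "i # remove1 j js"
  show ms: "mset (j # ?js') = mset (i # js)"
    using assms(4) by (simp add: insert_DiffM)
  show "?js' \<in> tuples n p"
    using assms order_ge_2 set_remove1_subset[of j js] unfolding tuples_def
    by (auto simp: length_remove1)
  show "A (j # ?js') \<noteq> 0"
    using nonzero_entry_perm[OF _ ms] Cons_mem_tuples[OF assms(1,2)] assms(3) order_eq_Suc by simp
qed

text \<open>On a nonzero entry, \<open>d i ^ m\<close> is the product of \<open>d\<close> over the indices of the entry, which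
  does not depend on their order; connectivity then spreads \<open>d 0 ^ m = 1\<close> to all indices.\<close>
lemma diag_similar_power_eq_1:
  assumes "diag_similar 1 d" and "d 0 = 1" and "i < n"
  shows "d i ^ m = 1"
proof -
  have pow: "d j ^ m = prod_list (map d (j # js))"
    if "j < n" "js \<in> tuples n p" "A (j # js) \<noteq> 0" for j js
  proof -
    have "d j ^ m = d j * d j ^ p"
      by (metis order_eq_Suc power_Suc)
    also have "d j ^ p = (\<Prod>k<p. d (js ! k))"
      using assms(1) that unfolding diag_similar_def by simp
    finally show ?thesis
      using prod_lessThan_nth[OF length_tuples[OF that(2)], of d] by simp
  qed
  have "j \<in> {j. j < n \<and> d j ^ m = 1}"
    if arc: "(a, j) \<in> D" and a_mem: "a \<in> {j. j < n \<and> d j ^ m = 1}" for a j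
  proof -
    obtain js where a: "a < n" and j: "j < n" and js: "js \<in> tuples n p" "A (a # js) \<noteq> 0" "j \<in> set js"
      using arc unfolding arc_iff by blast
    obtain js' where js': "js' \<in> tuples n p" "A (j # js') \<noteq> 0" "mset (j # js') = mset (a # js)"
      using nonzero_entry_rotate[OF a js] by blast
    have "d j ^ m = d a ^ m"
      using pow[OF j js'(1,2)] pow[OF a js(1,2)] prod_list_map_mset_eq[OF js'(3)] by simp
    then show ?thesis
      using a_mem j by simp
  qed
  then show ?thesis
    using arc_closed_set_full[of "{j. j < n \<and> d j ^ m = 1}" 0 i] assms(2,3) dim_pos by auto
qed

lemma incidence_sum_Cons:
  assumes "i < n" "js \<in> tuples n p"
  shows "(\<Sum>j<n. incidence (i # js) j * x j) = x i + (\<Sum>k<p. x (js ! k))"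
  using assms incidence_sum[of "i # js" n x] sum_lessThan_nth[OF length_tuples[OF assms(2)], of x]
  unfolding tuples_def by simp

lemma edge_condition_iff:
  "(\<forall>e\<in>edges m n A. (\<Sum>j<n. incidence e j * x j) mod m = 0) \<longleftrightarrow>
   (\<forall>i js. i < n \<longrightarrow> js \<in> tuples n p \<longrightarrow> A (i # js) \<noteq> 0 \<longrightarrow> (x i + (\<Sum>k<p. x (js ! k))) mod m = 0)"
proof safe
  fix i js assume edges: "\<forall>e\<in>edges m n A. (\<Sum>j<n. incidence e j * x j) mod m = 0"
    and i: "i < n" and js: "js \<in> tuples n p" and nz: "A (i # js) \<noteq> 0"
  have tup: "i # js \<in> tuples n m"
    using Cons_mem_tuples[OF i js] order_eq_Suc by simp
  have "sort (i # js) \<in> tuples n m"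
    using tup unfolding tuples_def by (simp only: mem_Collect_eq length_sort set_sort)
  moreover have "A (sort (i # js)) \<noteq> 0"
    using nonzero_entry_perm[OF tup, of "sort (i # js)"] nz mset_sort by blast
  ultimately have "sort (i # js) \<in> edges m n A"
    unfolding edges_def using sorted_sort[of "i # js"] by blast
  moreover have "incidence (sort (i # js)) = incidence (i # js)"
    by (simp add: incidence_def[abs_def])
  ultimately show "(x i + (\<Sum>k<p. x (js ! k))) mod m = 0"
    using edges incidence_sum_Cons[OF i js] by metis
next
  fix e assume entries: "\<forall>i js. i < n \<longrightarrow> js \<in> tuples n p \<longrightarrow> A (i # js) \<noteq> 0 \<longrightarrow>
      (x i + (\<Sum>k<p. x (js ! k))) mod m = 0"
    and e: "e \<in> edges m n A"
  then obtain i js where "e = i # js"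
    using order_ge_2 unfolding edges_def tuples_def by (cases e) auto
  with e have "i < n" "js \<in> tuples n p" "A (i # js) \<noteq> 0"
    unfolding edges_def tuples_def by auto
  then show "(\<Sum>j<n. incidence e j * x j) mod m = 0"
    using entries incidence_sum_Cons \<open>e = i # js\<close> by simp
qed

lemma PS0_iff:
  "x \<in> PS0 m n A \<longleftrightarrow>
    (\<forall>i<n. x i < m) \<and> (\<forall>i\<ge>n. x i = 0) \<and> x 0 = 0 \<and> diag_similar 1 (\<lambda>i. unit_root m (x i))"
proof -
  have "diag_similar 1 (\<lambda>i. unit_root m (x i)) \<longleftrightarrow>
    (\<forall>i js. i < n \<longrightarrow> js \<in> tuples n p \<longrightarrow> A (i # js) \<noteq> 0 \<longrightarrow> (x i + (\<Sum>k<p. x (js ! k))) mod m = 0)"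
    by (simp only: diag_similar_def mult_1 unit_root_prod_eq_power_iff[OF order_eq_Suc])
  then show ?thesis
    unfolding PS0_def edge_condition_iff by auto
qed

definition root_vec :: "(nat \<Rightarrow> nat) \<Rightarrow> nat \<Rightarrow> complex" where
  "root_vec x = polar (\<lambda>i. unit_root m (x i))"

definition root_index :: "(nat \<Rightarrow> complex) \<Rightarrow> nat \<Rightarrow> nat" where
  "root_index y = (\<lambda>i. if i < n then inv_into {..<m} (unit_root m) (sgn (y i)) else 0)"

lemma sgn_root_vec: "i < n \<Longrightarrow> sgn (root_vec x i) = unit_root m (x i)"
  unfolding root_vec_def by (simp add: sgn_polar)

lemma root_index_root_vec:
  assumes "\<And>i. i < n \<Longrightarrow> x i < m" and "\<And>i. n \<le> i \<Longrightarrow> x i = 0"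
  shows "root_index (root_vec x) = x"
proof
  have inj: "inj_on (unit_root m) {..<m}"
    using bij_betw_unit_root order_ge_2 unfolding bij_betw_def by simp
  fix i show "root_index (root_vec x) i = x i"
    using assms inv_into_f_f[OF inj] by (cases "i < n") (simp_all add: root_index_def sgn_root_vec)
qed

lemma root_index_PV0:
  assumes "y \<in> PV0 m n A" and "i < n"
  shows "root_index y i < m" and "unit_root m (root_index y i) = sgn (y i)"
proof -
  obtain d where d: "\<And>i. i < n \<Longrightarrow> cmod (d i) = 1" "d 0 = 1" "diag_similar 1 d" and "y = polar d"
    using assms(1) unfolding PV0_iff by blast
  then have "sgn (y i) = d i"
    using sgn_polar[of i d] assms(2) by simp
  moreover have root: "d i \<in> unit_root m ` {..<m}"
    using bij_betw_unit_root[of m] diag_similar_power_eq_1[OF d(3,2) assms(2)] order_ge_2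
    unfolding bij_betw_def by auto
  moreover have "inv_into {..<m} (unit_root m) (d i) \<in> {..<m}"
    using root by (rule inv_into_into)
  ultimately show "root_index y i < m" "unit_root m (root_index y i) = sgn (y i)"
    using assms(2) by (simp_all add: root_index_def f_inv_into_f)
qed

lemma root_vec_root_index:
  assumes "y \<in> PV0 m n A"
  shows "root_vec (root_index y) = y"
proof -
  obtain d where d: "\<And>i. i < n \<Longrightarrow> cmod (d i) = 1" and y: "y = polar d"
    using assms unfolding PV0_iff by blast
  have "root_vec (root_index y) = polar d"
    unfolding root_vec_def
    by (rule polar_cong) (use root_index_PV0(2)[OF assms] sgn_polar d y in auto)
  then show ?thesis
    using y by simp
qed

lemma root_vec_PV0: "x \<in> PS0 m n A \<Longrightarrow> root_vec x \<in> PV0 m n A"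
  unfolding PV0_iff PS0_iff root_vec_def by (intro exI[of _ "\<lambda>i. unit_root m (x i)"]) auto

lemma root_index_PS0:
  assumes y: "y \<in> PV0 m n A"
  shows "root_index y \<in> PS0 m n A"
proof -
  obtain d where d: "\<And>i. i < n \<Longrightarrow> cmod (d i) = 1" "d 0 = 1" "diag_similar 1 d"
    and "y = polar d"
    using y unfolding PV0_iff by blast
  then have unit_root_eq: "unit_root m (root_index y i) = d i" if "i < n" for i
    using root_index_PV0(2)[OF y that] sgn_polar[of i d, OF that d(1)[OF that]] by simp
  have "unit_root m (root_index y 0) = unit_root m 0"
    using unit_root_eq[of 0] d(2) dim_pos by simp
  then have "root_index y 0 = 0"
    using root_index_PV0(1)[OF y, of 0] unit_root_eq_iff[of m "root_index y 0" 0] dim_pos order_ge_2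
    by simp
  moreover have "diag_similar 1 (\<lambda>i. unit_root m (root_index y i))"
    by (rule diag_similar_cong[OF d(3)]) (simp_all add: unit_root_eq)
  ultimately show ?thesis
    unfolding PS0_iff using root_index_PV0(1)[OF y] by (simp add: root_index_def)
qed

lemma pv_comp_root_vec:
  "pv_comp m n A (root_vec x) (root_vec x') = root_vec (\<lambda>i. (x i + x' i) mod m)"
  unfolding root_vec_def using order_ge_2
  by (subst pv_comp_polar) (auto intro!: polar_cong simp: unit_root_mod unit_root_add)

lemma root_index_iso: "root_index \<in> iso (PV0_group m n A) (PS0_group m n A)"
proof (rule isoI)
  show "root_index \<in> hom (PV0_group m n A) (PS0_group m n A)"
  proof (rule homI)
    fix y assume "y \<in> carrier (PV0_group m n A)"
    then show "root_index y \<in> carrier (PS0_group m n A)"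
      by (simp add: PV0_group_def PS0_group_def root_index_PS0)
  next
    fix y z assume "y \<in> carrier (PV0_group m n A)" "z \<in> carrier (PV0_group m n A)"
    then have y: "y \<in> PV0 m n A" and z: "z \<in> PV0 m n A"
      by (simp_all add: PV0_group_def)
    have "root_index (pv_comp m n A y z) =
        root_index (root_vec (\<lambda>i. (root_index y i + root_index z i) mod m))"
      using pv_comp_root_vec root_vec_root_index[OF y] root_vec_root_index[OF z] by metis
    also have "\<dots> = (\<lambda>i. (root_index y i + root_index z i) mod m)"
      using order_ge_2 by (intro root_index_root_vec) (simp_all add: root_index_def)
    finally show "root_index (y \<otimes>\<^bsub>PV0_group m n A\<^esub> z) =
        root_index y \<otimes>\<^bsub>PS0_group m n A\<^esub> root_index z"
      by (simp add: PV0_group_def PS0_group_def)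
  qed
  have "bij_betw root_index (PV0 m n A) (PS0 m n A)"
  proof (rule bij_betw_byWitness[where f'=root_vec])
    show "\<forall>x\<in>PS0 m n A. root_index (root_vec x) = x"
      by (auto simp: PS0_iff intro!: root_index_root_vec)
  qed (auto simp: root_vec_root_index root_index_PS0 root_vec_PV0)
  then show "bij_betw root_index (carrier (PV0_group m n A)) (carrier (PS0_group m n A))"
    by (simp add: PV0_group_def PS0_group_def)
qed

end

theorem theorem3p4:
  fixes m n l :: nat and A :: "nat list \<Rightarrow> real"
  assumes "m \<ge> 2" and "n \<ge> 1" and "l \<ge> 1"
    and "nonneg_tensor m n A"
    and "comb_symmetric m n A"
    and "weakly_irreducible m n A"
    and "spectral_sym m n A l"
  shows "PV0_group m n A \<cong> PS0_group m n A \<and>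
    (prime m \<longrightarrow>
      (\<forall>j\<in>{1..<l}. \<exists>y\<in>PV_j m n A l j. PV_j m n A l j = pv_comp m n A y ` PV0 m n A))"
proof -
  interpret nonneg_weakly_irreducible_tensor m n A
    using assms by unfold_locales auto
  obtain v r where "\<And>i. i < n \<Longrightarrow> 0 < v i" "\<And>i. n \<le> i \<Longrightarrow> v i = 0" "v 0 = 1"
    "\<And>i. i < n \<Longrightarrow> real_tensor_apply m n A v i = r * v i ^ (m - 1)"
    using positive_eigenvector_exists by blast
  then interpret comb_symmetric_perron_tensor m n A v r
    using assms by unfold_locales auto
  text \<open>The coset description holds for every \<open>m\<close>.\<close>
  show ?thesis
    using is_isoI[OF root_index_iso] PV_j_coset[OF assms(7)] by blast
qed

end
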